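(* Let $V, L\ge 1$, $\mathcal{D}=[V]^L$, let $\pi$ be a joint distribution on $\mathcal{D}\times\mathcal{D}$, and let $\kappa:[0,1]\to[0,1]$ be differentiable with $\kappa_0=0$, $\kappa_1=1$, $\kappa_t<1$ for $t<1$. Let $p_t(x)=\sum_{x_0,x_1}\pi(x_0,x_1)\prod_{i=1}^L[(1-\kappa_t)\delta_{x_0^i}(x^i)+\kappa_t\delta_{x_1^i}(x^i)]$ and $u_t^i(x^i,z)=\sum_{x_0,x_1}\frac{\dot\kappa_t}{1-\kappa_t}[\delta_{x_1^i}(x^i)-\delta_{z^i}(x^i)]\,p_t(x_0,x_1\mid z)$, where $p_t(x_0,x_1\mid z)=p_t(z\mid x_0,x_1)\pi(x_0,x_1)/p_t(z)$. Let $e_m:[V]\to\mathbb{R}^d$ be a token embedding and take the similarity $s(a,b)=\|e_m(a)-e_m(b)\|^2$. Then $c(x_0,x_1)=\sum_{i=1}^L\|e_m(x_1^i)-e_m(x_0^i)\|^2=\|e_m(x_1)-e_m(x_0)\|^2$, so that $$\int_0^1\sum_{x_t}p_t(x_t)\Big[\sum_{i=1}^L\sum_{x^i\ne x_t^i}u_t^i(x^i,x_t)\,\|e_m(x^i)-e_m(x_t^i)\|^2\Big]dt=\sum_{x_0,x_1}\|e_m(x_1)-e_m(x_0)\|^2\,\pi(x_0,x_1).$$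
   Context: For a sequence $x\in[V]^L$, $e_m(x)\in\mathbb{R}^{dL}$ denotes the concatenation $(e_m(x^1),\dots,e_m(x^L))$, and $\|\cdot\|$ is the Euclidean norm. $\delta_a(b)=1$ if $a=b$ and $0$ otherwise. Terms with $p_t(x_t)=0$ contribute zero. *)

theory Defs
  imports "HOL-Analysis.Analysis"
begin

text \<open>Token set [V] = {0..<V}; sequences [V]^L are lists of length L over it.
  Positions are indexed 0..<L instead of 1..L.\<close>

definition seqs :: "nat \<Rightarrow> nat \<Rightarrow> nat list set" where
  "seqs V L = {xs. length xs = L \<and> set xs \<subseteq> {..<V}}"

definition kdelta :: "nat \<Rightarrow> nat \<Rightarrow> real" where
  "kdelta a b = (if a = b then 1 else 0)"

definition cond_path :: "nat \<Rightarrow> (real \<Rightarrow> real) \<Rightarrow> real \<Rightarrow> nat list \<Rightarrow> nat list \<Rightarrow> nat list \<Rightarrow> real" where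
  "cond_path L \<kappa> t z x0 x1 =
     (\<Prod>i<L. (1 - \<kappa> t) * kdelta (x0 ! i) (z ! i) + \<kappa> t * kdelta (x1 ! i) (z ! i))"

definition marg_path :: "nat \<Rightarrow> nat \<Rightarrow> (nat list \<Rightarrow> nat list \<Rightarrow> real) \<Rightarrow> (real \<Rightarrow> real) \<Rightarrow> real \<Rightarrow> nat list \<Rightarrow> real" where
  "marg_path V L \<pi> \<kappa> t z =
     (\<Sum>(x0, x1) \<in> seqs V L \<times> seqs V L. \<pi> x0 x1 * cond_path L \<kappa> t z x0 x1)"

text \<open>posterior p_t(x0, x1 | z) = p_t(z | x0,x1) pi(x0,x1) / p_t(z)  (division by 0 gives 0)\<close>
definition posterior :: "nat \<Rightarrow> nat \<Rightarrow> (nat list \<Rightarrow> nat list \<Rightarrow> real) \<Rightarrow> (real \<Rightarrow> real) \<Rightarrow> real \<Rightarrow> nat list \<Rightarrow> nat list \<Rightarrow> nat list \<Rightarrow> real" where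
  "posterior V L \<pi> \<kappa> t x0 x1 z =
     cond_path L \<kappa> t z x0 x1 * \<pi> x0 x1 / marg_path V L \<pi> \<kappa> t z"

text \<open>velocity u_t^i(a, z) with kappa' the derivative of kappa\<close>
definition velocity :: "nat \<Rightarrow> nat \<Rightarrow> (nat list \<Rightarrow> nat list \<Rightarrow> real) \<Rightarrow> (real \<Rightarrow> real) \<Rightarrow> (real \<Rightarrow> real)
    \<Rightarrow> real \<Rightarrow> nat \<Rightarrow> nat \<Rightarrow> nat list \<Rightarrow> real" where
  "velocity V L \<pi> \<kappa> \<kappa>' t i a z =
     (\<Sum>(x0, x1) \<in> seqs V L \<times> seqs V L.
        \<kappa>' t / (1 - \<kappa> t) * (kdelta (x1 ! i) a - kdelta (z ! i) a) * posterior V L \<pi> \<kappa> t x0 x1 z)"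

text \<open>Concatenated embedding e_m(x) in R^{dL}, coordinates indexed by (position, component).\<close>
definition emb_cat :: "(nat \<Rightarrow> real ^ 'd) \<Rightarrow> nat list \<Rightarrow> nat \<times> 'd \<Rightarrow> real" where
  "emb_cat e x = (\<lambda>(i, j). e (x ! i) $ j)"

definition cat_norm :: "nat \<Rightarrow> (nat \<times> 'd::finite \<Rightarrow> real) \<Rightarrow> real" where
  "cat_norm L v = L2_set v ({..<L} \<times> UNIV)"

end

(*
  Multiplying the velocity by p_t(z) turns the posterior back into pi(x0, x1) p_t(z | x0, x1), and
  for a jump a different from z^i only the term delta_{x1^i}(a) survives, so position i is charged
  s(x1^i, z^i). Since the conditional path factorizes over positions, averaging over z leaves
  (1 - kappa_t) s(x1^i, x0^i) + kappa_t s(x1^i, x1^i) = (1 - kappa_t) s(x1^i, x0^i), and the factor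
  1 - kappa_t cancels the one in the velocity. Hence for t < 1 the integrand is kappa'_t times the
  expected cost, whose integral over [0, 1] is (kappa_1 - kappa_0) times that cost.
*)
theory Submission
  imports Defs
begin

lemma finite_seqs: "finite (seqs V L)"
proof -
  have "seqs V L = {xs. set xs \<subseteq> {..<V} \<and> length xs = L}"
    by (auto simp: seqs_def)
  then show ?thesis
    using finite_lists_length_eq[of "{..<V}" L] by simp
qed

lemma seqs_0: "seqs V 0 = {[]}"
  by (auto simp: seqs_def)

lemma seqs_Suc: "seqs V (Suc L) = (\<lambda>(v, xs). v # xs) ` ({..<V} \<times> seqs V L)"
proof (rule set_eqI)
  fix ys
  show "ys \<in> seqs V (Suc L) \<longleftrightarrow> ys \<in> (\<lambda>(v, xs). v # xs) ` ({..<V} \<times> seqs V L)"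
    by (cases ys) (auto simp: seqs_def)
qed

lemma nth_seqs_less: "x \<in> seqs V L \<Longrightarrow> i < L \<Longrightarrow> x ! i < V"
  by (auto simp: seqs_def dest!: nth_mem)

lemma sum_seqs_prod_nth:
  fixes f :: "nat \<Rightarrow> nat \<Rightarrow> 'a::comm_semiring_1"
  shows "(\<Sum>xs\<in>seqs V L. \<Prod>j<L. f j (xs ! j)) = (\<Prod>j<L. \<Sum>v<V. f j v)"
proof (induction L arbitrary: f)
  case 0
  then show ?case by (simp add: seqs_0)
next
  case (Suc L)
  have inj: "inj_on (\<lambda>(v, xs). v # xs) ({..<V} \<times> seqs V L)"
    by (auto simp: inj_on_def)
  have "(\<Sum>xs\<in>seqs V (Suc L). \<Prod>j<Suc L. f j (xs ! j))
      = (\<Sum>(v, xs)\<in>{..<V} \<times> seqs V L. \<Prod>j<Suc L. f j ((v # xs) ! j))"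
    unfolding seqs_Suc by (subst sum.reindex[OF inj]) (simp add: case_prod_unfold)
  also have "\<dots> = (\<Sum>v<V. \<Sum>xs\<in>seqs V L. f 0 v * (\<Prod>j<L. f (Suc j) (xs ! j)))"
    by (subst sum.cartesian_product[symmetric])
      (simp del: prod.lessThan_Suc add: prod.lessThan_Suc_shift)
  also have "\<dots> = (\<Sum>v<V. f 0 v * (\<Prod>j<L. \<Sum>v<V. f (Suc j) v))"
    by (simp add: sum_distrib_left[symmetric] Suc.IH[of "\<lambda>j. f (Suc j)"])
  also have "\<dots> = (\<Prod>j<Suc L. \<Sum>v<V. f j v)"
    by (simp del: prod.lessThan_Suc add: prod.lessThan_Suc_shift sum_distrib_right)
  finally show ?case .
qed

lemma sum_seqs_prod_nth_mult:
  fixes w :: "nat \<Rightarrow> nat \<Rightarrow> 'a::comm_semiring_1"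
  assumes "i < L"
  shows "(\<Sum>xs\<in>seqs V L. (\<Prod>j<L. w j (xs ! j)) * g (xs ! i))
     = (\<Sum>v<V. w i v * g v) * (\<Prod>j\<in>{..<L} - {i}. \<Sum>v<V. w j v)"
proof -
  define f where "f j v = w j v * (if j = i then g v else 1)" for j v
  have "(\<Prod>j<L. f j (xs ! j)) = (\<Prod>j<L. w j (xs ! j)) * g (xs ! i)" for xs
    using assms by (simp add: f_def prod.distrib prod.delta)
  then have "(\<Sum>xs\<in>seqs V L. (\<Prod>j<L. w j (xs ! j)) * g (xs ! i)) = (\<Prod>j<L. \<Sum>v<V. f j v)"
    by (simp add: sum_seqs_prod_nth[symmetric])
  also have "\<dots> = (\<Sum>v<V. f i v) * (\<Prod>j\<in>{..<L} - {i}. \<Sum>v<V. f j v)"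
    using assms by (subst prod.remove[of _ i]) auto
  also have "\<dots> = (\<Sum>v<V. w i v * g v) * (\<Prod>j\<in>{..<L} - {i}. \<Sum>v<V. w j v)"
    by (simp add: f_def)
  finally show ?thesis .
qed

lemma sum_kdelta_mult: "a < V \<Longrightarrow> (\<Sum>v<V. kdelta a v * h v) = h a"
  by (simp add: kdelta_def if_distrib[where f = "\<lambda>x. x * _"] sum.delta cong: if_cong)

lemma sum_kdelta_mult_remove:
  assumes "b < V" and "h z = 0"
  shows "(\<Sum>a\<in>{..<V} - {z}. kdelta b a * h a) = h b"
  using assms by (simp add: sum_diff1 sum_kdelta_mult)

lemma cond_path_nonneg:
  "0 \<le> \<kappa> t \<Longrightarrow> \<kappa> t \<le> 1 \<Longrightarrow> 0 \<le> cond_path L \<kappa> t z x0 x1"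
  unfolding cond_path_def by (intro prod_nonneg) (auto simp: kdelta_def)

lemma sum_cond_path_nth:
  assumes "i < L" "x0 \<in> seqs V L" "x1 \<in> seqs V L"
  shows "(\<Sum>z\<in>seqs V L. cond_path L \<kappa> t z x0 x1 * g (z ! i))
       = (1 - \<kappa> t) * g (x0 ! i) + \<kappa> t * g (x1 ! i)"
proof -
  have coordinate: "(\<Sum>v<V. ((1 - \<kappa> t) * kdelta (x0 ! j) v + \<kappa> t * kdelta (x1 ! j) v) * h v)
       = (1 - \<kappa> t) * h (x0 ! j) + \<kappa> t * h (x1 ! j)" if "j < L" for j h
    using that assms(2,3)
    by (simp add: distrib_right sum.distrib mult.assoc sum_distrib_left[symmetric]
        sum_kdelta_mult nth_seqs_less)
  show ?thesis
    unfolding cond_path_def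
    by (subst sum_seqs_prod_nth_mult[OF assms(1)])
      (use coordinate[of _ "\<lambda>_. 1"] coordinate[OF assms(1)] in simp)
qed

lemma sum_cond_path_jump_cost:
  assumes "i < L" "x0 \<in> seqs V L" "x1 \<in> seqs V L" and "\<forall>a. s a a = 0"
  shows "(\<Sum>z\<in>seqs V L. cond_path L \<kappa> t z x0 x1 *
            (\<Sum>a\<in>{..<V} - {z ! i}. kdelta (x1 ! i) a * s a (z ! i)))
       = (1 - \<kappa> t) * s (x1 ! i) (x0 ! i)"
proof -
  have "(\<Sum>a\<in>{..<V} - {v}. kdelta (x1 ! i) a * s a v) = s (x1 ! i) v" for v
    using assms by (intro sum_kdelta_mult_remove) (auto simp: nth_seqs_less)
  then show ?thesis
    using sum_cond_path_nth[OF assms(1-3), of \<kappa> t "\<lambda>v. s (x1 ! i) v"] assms(4) by simp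
qed

lemma marg_path_mult_posterior:
  assumes "\<forall>x0\<in>seqs V L. \<forall>x1\<in>seqs V L. \<pi> x0 x1 \<ge> 0" "0 \<le> \<kappa> t" "\<kappa> t \<le> 1"
    and "x0 \<in> seqs V L" "x1 \<in> seqs V L"
  shows "marg_path V L \<pi> \<kappa> t z * posterior V L \<pi> \<kappa> t x0 x1 z = cond_path L \<kappa> t z x0 x1 * \<pi> x0 x1"
proof (cases "marg_path V L \<pi> \<kappa> t z = 0")
  case True
  have "\<forall>p\<in>seqs V L \<times> seqs V L. (case p of (y0, y1) \<Rightarrow> \<pi> y0 y1 * cond_path L \<kappa> t z y0 y1) = 0"
    using True assms(1-3) unfolding marg_path_def
    by (subst sum_nonneg_eq_0_iff[symmetric]) (auto simp: finite_seqs cond_path_nonneg)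
  then show ?thesis
    using True assms(4,5) by (auto simp: posterior_def)
qed (simp add: posterior_def)

lemma marg_path_mult_velocity:
  assumes "\<forall>x0\<in>seqs V L. \<forall>x1\<in>seqs V L. \<pi> x0 x1 \<ge> 0" "0 \<le> \<kappa> t" "\<kappa> t \<le> 1"
    and "a \<noteq> z ! i"
  shows "marg_path V L \<pi> \<kappa> t z * velocity V L \<pi> \<kappa> \<kappa>' t i a z
       = \<kappa>' t / (1 - \<kappa> t) * (\<Sum>(x0, x1)\<in>seqs V L \<times> seqs V L.
            \<pi> x0 x1 * (cond_path L \<kappa> t z x0 x1 * kdelta (x1 ! i) a))"
  unfolding velocity_def sum_distrib_left
  by (intro sum.cong refl)
    (use assms marg_path_mult_posterior[of V L \<pi> \<kappa> t] in \<open>auto simp: kdelta_def\<close>)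

lemma sum_nested_swap:
  "(\<Sum>z\<in>Z. \<Sum>i\<in>I. \<Sum>a\<in>A z i. \<Sum>p\<in>P. F z i a p) = (\<Sum>p\<in>P. \<Sum>i\<in>I. \<Sum>z\<in>Z. \<Sum>a\<in>A z i. F z i a p)"
proof -
  have "(\<Sum>z\<in>Z. \<Sum>i\<in>I. \<Sum>a\<in>A z i. \<Sum>p\<in>P. F z i a p) = (\<Sum>i\<in>I. \<Sum>z\<in>Z. \<Sum>p\<in>P. \<Sum>a\<in>A z i. F z i a p)"
    by (subst sum.swap) (simp only: sum.swap[of _ "A _ _"])
  also have "\<dots> = (\<Sum>i\<in>I. \<Sum>p\<in>P. \<Sum>z\<in>Z. \<Sum>a\<in>A z i. F z i a p)"
    by (rule sum.cong[OF refl sum.swap])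
  also have "\<dots> = (\<Sum>p\<in>P. \<Sum>i\<in>I. \<Sum>z\<in>Z. \<Sum>a\<in>A z i. F z i a p)"
    by (rule sum.swap)
  finally show ?thesis .
qed

lemma sum_marg_path_velocity_cost:
  assumes "\<forall>x0\<in>seqs V L. \<forall>x1\<in>seqs V L. \<pi> x0 x1 \<ge> 0" "0 \<le> \<kappa> t" "\<kappa> t < 1"
    and "\<forall>a. s a a = 0"
  shows "(\<Sum>z\<in>seqs V L. marg_path V L \<pi> \<kappa> t z *
            (\<Sum>i<L. \<Sum>a\<in>{..<V} - {z ! i}. velocity V L \<pi> \<kappa> \<kappa>' t i a z * s a (z ! i)))
       = \<kappa>' t * (\<Sum>(x0, x1)\<in>seqs V L \<times> seqs V L. (\<Sum>i<L. s (x1 ! i) (x0 ! i)) * \<pi> x0 x1)"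
proof -
  let ?S = "seqs V L"
  define c where "c = \<kappa>' t / (1 - \<kappa> t)"
  have "(\<Sum>z\<in>?S. marg_path V L \<pi> \<kappa> t z *
            (\<Sum>i<L. \<Sum>a\<in>{..<V} - {z ! i}. velocity V L \<pi> \<kappa> \<kappa>' t i a z * s a (z ! i)))
      = c * (\<Sum>z\<in>?S. \<Sum>i<L. \<Sum>a\<in>{..<V} - {z ! i}. \<Sum>(x0, x1)\<in>?S \<times> ?S.
            \<pi> x0 x1 * (cond_path L \<kappa> t z x0 x1 * (kdelta (x1 ! i) a * s a (z ! i))))"
    using assms(1-3)
    by (simp add: sum_distrib_left mult.assoc[symmetric] marg_path_mult_velocity flip: c_def)
      (simp add: sum_distrib_left sum_distrib_right case_prod_unfold mult_ac)
  also have "\<dots> = c * (\<Sum>(x0, x1)\<in>?S \<times> ?S. \<pi> x0 x1 * (\<Sum>i<L. \<Sum>z\<in>?S. cond_path L \<kappa> t z x0 x1 *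
            (\<Sum>a\<in>{..<V} - {z ! i}. kdelta (x1 ! i) a * s a (z ! i))))"
    unfolding sum_nested_swap by (simp add: case_prod_unfold sum_distrib_left)
  also have "\<dots> = c * (\<Sum>(x0, x1)\<in>?S \<times> ?S. \<pi> x0 x1 * (\<Sum>i<L. (1 - \<kappa> t) * s (x1 ! i) (x0 ! i)))"
    using assms(4) by (intro arg_cong[where f = "(*) c"] sum.cong refl)
      (auto simp: sum_cond_path_jump_cost)
  also have "\<dots> = \<kappa>' t * (\<Sum>(x0, x1)\<in>?S \<times> ?S. (\<Sum>i<L. s (x1 ! i) (x0 ! i)) * \<pi> x0 x1)"
    using assms(3)
    by (simp add: c_def sum_distrib_left sum_distrib_right case_prod_unfold mult_ac)
  finally show ?thesis .
qed

lemma power2_L2_set: "(L2_set f A)\<^sup>2 = (\<Sum>i\<in>A. (f i)\<^sup>2)"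
  unfolding L2_set_def by (simp add: sum_nonneg)

lemma cat_norm_emb_cat_diff_power2:
  "(\<Sum>i<L. (norm (e (x1 ! i) - e (x0 ! i)))\<^sup>2)
     = (cat_norm L (\<lambda>p. emb_cat e x1 p - emb_cat e x0 p))\<^sup>2"
proof -
  have "(cat_norm L (\<lambda>p. emb_cat e x1 p - emb_cat e x0 p))\<^sup>2
      = (\<Sum>p\<in>{..<L} \<times> UNIV. (emb_cat e x1 p - emb_cat e x0 p)\<^sup>2)"
    by (simp add: cat_norm_def power2_L2_set)
  also have "\<dots> = (\<Sum>i<L. \<Sum>j\<in>UNIV. (e (x1 ! i) $ j - e (x0 ! i) $ j)\<^sup>2)"
    by (simp add: sum.cartesian_product emb_cat_def split_def)
  also have "\<dots> = (\<Sum>i<L. (norm (e (x1 ! i) - e (x0 ! i)))\<^sup>2)"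
    by (simp add: norm_vec_def power2_L2_set)
  finally show ?thesis ..
qed

lemma has_integral_derivative_mult_right:
  fixes f f' g :: "real \<Rightarrow> real"
  assumes "a \<le> b" and "\<forall>t\<in>{a..b}. (f has_real_derivative f' t) (at t within {a..b})"
    and "\<forall>t\<in>{a..<b}. g t = f' t * C"
  shows "(g has_integral (f b - f a) * C) {a..b}"
proof (rule has_integral_spike_finite[of "{b}"])
  show "((\<lambda>t. f' t * C) has_integral (f b - f a) * C) {a..b}"
    unfolding left_diff_distrib
    by (rule fundamental_theorem_of_calculus)
      (use assms(1,2) in \<open>auto simp: has_real_derivative_iff_has_vector_derivative[symmetric]
         intro!: derivative_eq_intros\<close>)
qed (use assms(3) in auto)

theorem corollary2:
  fixes V L :: nat
    and \<pi> :: "nat list \<Rightarrow> nat list \<Rightarrow> real"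
    and \<kappa> \<kappa>' :: "real \<Rightarrow> real"
    and e :: "nat \<Rightarrow> real ^ 'd"
  assumes "V \<ge> 1" and "L \<ge> 1"
    and pi_nonneg: "\<forall>x0\<in>seqs V L. \<forall>x1\<in>seqs V L. \<pi> x0 x1 \<ge> 0"
    and pi_sum: "(\<Sum>(x0, x1) \<in> seqs V L \<times> seqs V L. \<pi> x0 x1) = 1"
    and kappa_deriv: "\<forall>t\<in>{0..1}. (\<kappa> has_real_derivative \<kappa>' t) (at t within {0..1})"
    and kappa_range: "\<forall>t\<in>{0..1}. \<kappa> t \<in> {0..1}"
    and "\<kappa> 0 = 0" and "\<kappa> 1 = 1"
    and "\<forall>t\<in>{0..<1}. \<kappa> t < 1"
  shows "(\<forall>x0\<in>seqs V L. \<forall>x1\<in>seqs V L.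
            (\<Sum>i<L. (norm (e (x1 ! i) - e (x0 ! i)))\<^sup>2)
              = (cat_norm L (\<lambda>p. emb_cat e x1 p - emb_cat e x0 p))\<^sup>2)
       \<and> ((\<lambda>t. \<Sum>xt\<in>seqs V L. marg_path V L \<pi> \<kappa> t xt *
               (\<Sum>i<L. \<Sum>a\<in>{..<V} - {xt ! i}.
                  velocity V L \<pi> \<kappa> \<kappa>' t i a xt * (norm (e a - e (xt ! i)))\<^sup>2))
          has_integral
            (\<Sum>(x0, x1) \<in> seqs V L \<times> seqs V L.
               (cat_norm L (\<lambda>p. emb_cat e x1 p - emb_cat e x0 p))\<^sup>2 * \<pi> x0 x1)) {0..1}"
proof -
  let ?C = "\<Sum>(x0, x1) \<in> seqs V L \<times> seqs V L.
              (cat_norm L (\<lambda>p. emb_cat e x1 p - emb_cat e x0 p))\<^sup>2 * \<pi> x0 x1"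
  have "(\<Sum>xt\<in>seqs V L. marg_path V L \<pi> \<kappa> t xt *
           (\<Sum>i<L. \<Sum>a\<in>{..<V} - {xt ! i}.
              velocity V L \<pi> \<kappa> \<kappa>' t i a xt * (norm (e a - e (xt ! i)))\<^sup>2))
        = \<kappa>' t * ?C" if "t \<in> {0..<1}" for t
    using sum_marg_path_velocity_cost[OF pi_nonneg, of \<kappa> t "\<lambda>a b. (norm (e a - e b))\<^sup>2" \<kappa>']
      that kappa_range assms(9)
    by (simp add: cat_norm_emb_cat_diff_power2)
  then have "((\<lambda>t. \<Sum>xt\<in>seqs V L. marg_path V L \<pi> \<kappa> t xt *
               (\<Sum>i<L. \<Sum>a\<in>{..<V} - {xt ! i}.
                  velocity V L \<pi> \<kappa> \<kappa>' t i a xt * (norm (e a - e (xt ! i)))\<^sup>2))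
          has_integral (\<kappa> 1 - \<kappa> 0) * ?C) {0..1}"
    using kappa_deriv by (intro has_integral_derivative_mult_right) auto
  then show ?thesis
    using assms(7,8) by (simp add: cat_norm_emb_cat_diff_power2)
qed

end
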